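(* Let $G$ be a connected threshold graph of order $n\ge 4$ and size $m$ with $n-1<m<\binom{n}{2}$, with $c$ type 1 vertices, backwards zero position sequence $(b_1,\ldots,b_z)$ and $F_1=\sum_{i=1}^z b_i^2$. Let $\xi\in\mathbb{R}$ be the greatest real root of \[P(x)=x^3-(c+1)x^2+\Big(c-\sum_{i=1}^z b_i\Big)x+\Big(c\sum_{i=1}^z b_i-F_1\Big).\] Then $\xi$ is a simple root of $P$ and $|\xi|>|\eta|$ for every other root $\eta$ of $P$.
   Context: A threshold graph is a simple graph whose vertices can be ordered $v_1,\ldots,v_n$ so that for each $2\le i\le n$, $v_i$ is either adjacent to all of $v_1,\ldots,v_{i-1}$ (then $a_i=1$) or to none of them (then $a_i=0$); by convention $a_1=1$. Vertex $v_i$ is of type 1 if $a_i=1$ and of type 0 if $a_i=0$; $c$ and $z$ are the numbers of type 1 and type 0 vertices (here $c\ge 3$, $z\ge 1$). The backwards zero position sequence $(b_1,\ldots,b_z)$ is defined by letting $b_i$ be the number of type 1 vertices appearing after the $i$-th type 0 vertex in the order $v_1,\ldots,v_n$; one has $1\le b_i\le c-1$. *)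

theory Defs
  imports Complex_Main "HOL-Computational_Algebra.Polynomial"
begin

text \<open>A threshold graph on vertices 1..n given by its creation sequence a_1..a_n
  (a i = True means type 1). For i < j, v_i and v_j are adjacent iff a j.\<close>

definition thr_adj :: "(nat \<Rightarrow> bool) \<Rightarrow> nat \<Rightarrow> nat \<Rightarrow> nat \<Rightarrow> bool" where
  "thr_adj a n u v \<longleftrightarrow> u \<in> {1..n} \<and> v \<in> {1..n} \<and> u \<noteq> v \<and> a (max u v)"

definition thr_edges :: "(nat \<Rightarrow> bool) \<Rightarrow> nat \<Rightarrow> nat set set" where
  "thr_edges a n = {{u, v} | u v. thr_adj a n u v}"

definition thr_size :: "(nat \<Rightarrow> bool) \<Rightarrow> nat \<Rightarrow> nat" where
  "thr_size a n = card (thr_edges a n)"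

definition thr_connected :: "(nat \<Rightarrow> bool) \<Rightarrow> nat \<Rightarrow> bool" where
  "thr_connected a n \<longleftrightarrow> (\<forall>u\<in>{1..n}. \<forall>v\<in>{1..n}. (thr_adj a n)\<^sup>*\<^sup>* u v)"

definition thr_c :: "(nat \<Rightarrow> bool) \<Rightarrow> nat \<Rightarrow> nat" where
  "thr_c a n = card {i \<in> {1..n}. a i}"

definition thr_bseq :: "(nat \<Rightarrow> bool) \<Rightarrow> nat \<Rightarrow> nat list" where
  "thr_bseq a n = map (\<lambda>p. card {j \<in> {p<..n}. a j}) (filter (\<lambda>p. \<not> a p) [1..<n+1])"

definition thr_F1 :: "(nat \<Rightarrow> bool) \<Rightarrow> nat \<Rightarrow> nat" where
  "thr_F1 a n = sum_list (map (\<lambda>b. b ^ 2) (thr_bseq a n))"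

definition thr_P :: "(nat \<Rightarrow> bool) \<Rightarrow> nat \<Rightarrow> real poly" where
  "thr_P a n = (let c = real (thr_c a n); S = real (sum_list (thr_bseq a n));
                    F = real (thr_F1 a n)
                in [: c * S - F, c - S, - (c + 1), 1 :])"

end

theory Submission
  imports Defs
begin

(* Write S = b_1 + ... + b_z and F = F_1. Since 1 <= b_i < c, we have 0 < F < c S, so
   P(0) = c S - F > 0 while P(c) = -F < 0; as P is monic it has real roots 0 < r < c < s.
   The product of the three roots is -P(0) < 0, so the third root t is negative, and their
   sum c + 1 gives |t| = r + s - c - 1 < s. *)

lemma monic_cubic_factor:
  fixes d0 d1 d2 r s :: "'a::idom"
  assumes "r \<noteq> s" "poly [:d0, d1, d2, 1:] r = 0" "poly [:d0, d1, d2, 1:] s = 0"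
  shows "[:d0, d1, d2, 1:] = [:d2 + r + s, 1:] * [:-r, 1:] * [:-s, 1:]"
proof -
  have "(r - s) * (r\<^sup>2 + r * s + s\<^sup>2 + d2 * (r + s) + d1)
        = poly [:d0, d1, d2, 1:] r - poly [:d0, d1, d2, 1:] s"
    by (simp add: algebra_simps power2_eq_square)
  also have "\<dots> = 0" using assms(2,3) by simp
  finally have "r\<^sup>2 + r * s + s\<^sup>2 + d2 * (r + s) + d1 = 0"
    using assms(1) by simp
  then have d1: "d1 = - (r * r + r * s + s * s) - d2 * (r + s)"
    by algebra
  have "d0 + r * (d1 + r * (d2 + r)) = 0"
    using assms(2) by simp
  then have d0: "d0 = (d2 + r + s) * r * s"
    using d1 by algebra
  show ?thesis
    unfolding d0 d1 by (simp add: algebra_simps)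
qed

lemma order_linear_factor_simple:
  fixes q :: "'a::idom poly"
  assumes "poly q x \<noteq> 0"
  shows "order x ([:-x, 1:] * q) = 1"
proof -
  have "q \<noteq> 0" using assms by auto
  then have "order x ([:-x, 1:] * q) = order x [:-x, 1:] + order x q"
    by (intro order_mult no_zero_divisors) auto
  moreover have "order x [:-x, 1:] = 1"
    using order_power_n_n[of x 1] by simp
  moreover have "order x q = 0"
    using assms by (rule order_0I)
  ultimately show ?thesis by simp
qed

lemma monic_cubic_dominant_root:
  fixes d0 d1 d2 c \<xi> :: real
  defines "p \<equiv> [:d0, d1, d2, 1:]"
  assumes "0 < d0" "0 < c" "c \<le> - d2" "poly p c < 0"
    and "poly p \<xi> = 0" "\<forall>x. poly p x = 0 \<longrightarrow> x \<le> \<xi>"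
  shows "order \<xi> p = 1 \<and>
         (\<forall>\<eta>::complex. poly (map_poly of_real p) \<eta> = 0 \<and> \<eta> \<noteq> of_real \<xi> \<longrightarrow> cmod \<eta> < \<bar>\<xi>\<bar>)"
proof -
  have "poly p 0 > 0" using assms(2) by (simp add: p_def)
  then obtain r where r: "0 < r" "r < c" "poly p r = 0"
    using poly_IVT_neg[OF \<open>0 < c\<close>] \<open>poly p c < 0\<close> by blast
  have "lead_coeff p = 1" by (simp add: p_def)
  then obtain L where L: "\<forall>x \<ge> L. poly p x \<ge> 1"
    using poly_pinfty_gt_lc[of p] by auto
  then have "poly p (max L (c + 1)) > 0"
    by (smt (verit) max.cobounded1)
  moreover have "c < max L (c + 1)" by simp
  ultimately obtain s where s: "c < s" "poly p s = 0"
    using poly_IVT_pos[of c _ p] \<open>poly p c < 0\<close> by blast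
  define t where "t = - d2 - r - s"
  have p_factor: "p = [:-s, 1:] * ([:-t, 1:] * [:-r, 1:])"
    using monic_cubic_factor[of r s d0 d1 d2] r s
    unfolding p_def t_def by (simp add: algebra_simps)
  have poly_p: "poly p x = (x - t) * (x - r) * (x - s)" for x
    unfolding p_factor by (simp add: algebra_simps)
  have "0 < (r * s) * - t"
    using \<open>poly p 0 > 0\<close> unfolding poly_p by (simp add: algebra_simps)
  then have "t < 0"
    using zero_less_mult_pos[of "r * s" "- t"] r s \<open>0 < c\<close> by simp
  have "- t < s"
    using r \<open>c \<le> - d2\<close> unfolding t_def by simp
  have "\<xi> = s"
    using assms(6,7) s r \<open>t < 0\<close> unfolding poly_p by force
  have "poly ([:-t, 1:] * [:-r, 1:]) s = (s - t) * (s - r)"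
    by (simp add: algebra_simps)
  also have "\<dots> > 0"
    using r s \<open>t < 0\<close> by simp
  finally have "order \<xi> p = 1"
    unfolding p_factor \<open>\<xi> = s\<close> by (intro order_linear_factor_simple) simp
  moreover have "cmod \<eta> < \<bar>\<xi>\<bar>"
    if "poly (map_poly of_real p) \<eta> = 0" "\<eta> \<noteq> of_real \<xi>" for \<eta>
  proof -
    have "poly (map_poly of_real p) \<eta> = (\<eta> - of_real t) * (\<eta> - of_real r) * (\<eta> - of_real s)"
      unfolding p_factor by (simp add: map_poly_pCons algebra_simps)
    then have "\<eta> = of_real t \<or> \<eta> = of_real r"
      using that \<open>\<xi> = s\<close> by auto
    then show ?thesis
      using \<open>\<xi> = s\<close> \<open>t < 0\<close> \<open>- t < s\<close> r s by auto
  qed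
  ultimately show ?thesis by blast
qed

lemma thr_connected_last_type1:
  assumes "thr_connected a n" "2 \<le> n"
  shows "a n"
proof (rule ccontr)
  assume "\<not> a n"
  have "(thr_adj a n)\<^sup>*\<^sup>* n 1"
    using assms unfolding thr_connected_def by auto
  then show False
  proof (cases rule: converse_rtranclpE)
    case base
    then show ?thesis using assms(2) by simp
  next
    case (step y)
    then show ?thesis using \<open>\<not> a n\<close> unfolding thr_adj_def by (auto simp: max_def)
  qed
qed

lemma thr_bseq_bounds:
  assumes "a 1" "a n" "b \<in> set (thr_bseq a n)"
  shows "1 \<le> b \<and> b < thr_c a n"
proof -
  obtain p where "p \<in> set (filter (\<lambda>p. \<not> a p) [1..<n+1])" and b: "b = card {j \<in> {p<..n}. a j}"
    using assms(3) unfolding thr_bseq_def by auto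
  then have p: "p \<in> {1..n}" "\<not> a p" by auto
  have "p < n" using p assms(2) by (cases "p = n") auto
  then have "n \<in> {j \<in> {p<..n}. a j}" using assms(2) by auto
  then have "card {n} \<le> b"
    unfolding b by (intro card_mono) auto
  then have "1 \<le> b" by simp
  moreover have "{j \<in> {p<..n}. a j} \<subset> {i \<in> {1..n}. a i}"
  proof -
    have "{j \<in> {p<..n}. a j} \<subseteq> {i \<in> {1..n}. a i}" using p by auto
    moreover have "1 \<in> {i \<in> {1..n}. a i} - {j \<in> {p<..n}. a j}" using assms(1) p by auto
    ultimately show ?thesis by blast
  qed
  then have "b < thr_c a n"
    unfolding b thr_c_def by (intro psubset_card_mono) simp_all
  ultimately show ?thesis ..
qed

lemma thr_size_eq_choose_two:
  assumes "thr_bseq a n = []"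
  shows "thr_size a n = n choose 2"
proof -
  have all_type1: "\<forall>p\<in>{1..n}. a p"
    using assms unfolding thr_bseq_def by (auto simp: filter_empty_conv)
  have "thr_edges a n = {B. B \<subseteq> {1..n} \<and> card B = 2}"
  proof (intro set_eqI iffI)
    fix B assume "B \<in> thr_edges a n"
    then show "B \<in> {B. B \<subseteq> {1..n} \<and> card B = 2}"
      unfolding thr_edges_def thr_adj_def by auto
  next
    fix B assume "B \<in> {B. B \<subseteq> {1..n} \<and> card B = 2}"
    then obtain u v where "B = {u, v}" "u \<noteq> v" "u \<in> {1..n}" "v \<in> {1..n}"
      by (auto simp: card_2_iff)
    moreover have "a (max u v)"
      using all_type1 calculation by (simp add: max_def)
    ultimately show "B \<in> thr_edges a n"
      unfolding thr_edges_def thr_adj_def by blast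
  qed
  then show ?thesis
    unfolding thr_size_def by (simp add: n_subsets)
qed

lemma thr_F1_bounds:
  assumes "a 1" "a n" "thr_bseq a n \<noteq> []"
  shows "0 < thr_F1 a n" "thr_F1 a n < thr_c a n * sum_list (thr_bseq a n)"
proof -
  have pos: "0 < b" and less_c: "b < thr_c a n" if "b \<in> set (thr_bseq a n)" for b
    using thr_bseq_bounds[OF assms(1,2) that] by auto
  have "sum_list (map (\<lambda>b. 0) (thr_bseq a n)) < thr_F1 a n"
    unfolding thr_F1_def
    by (rule sum_list_strict_mono[OF assms(3)]) (simp add: pos)
  then show "0 < thr_F1 a n" by simp
  have "thr_F1 a n < sum_list (map (\<lambda>b. thr_c a n * b) (thr_bseq a n))"
    unfolding thr_F1_def
    by (rule sum_list_strict_mono[OF assms(3)]) (simp add: pos less_c power2_eq_square)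
  then show "thr_F1 a n < thr_c a n * sum_list (thr_bseq a n)"
    by (simp add: sum_list_const_mult)
qed

theorem lemma5p4:
  fixes a :: "nat \<Rightarrow> bool" and n :: nat and \<xi> :: real
  assumes "a 1"
    and "n \<ge> 4"
    and "thr_connected a n"
    and "n - 1 < thr_size a n"
    and "thr_size a n < n choose 2"
    and "poly (thr_P a n) \<xi> = 0"
    and "\<forall>x::real. poly (thr_P a n) x = 0 \<longrightarrow> x \<le> \<xi>"
  shows "order \<xi> (thr_P a n) = 1 \<and>
         (\<forall>\<eta>::complex. poly (map_poly of_real (thr_P a n)) \<eta> = 0 \<and> \<eta> \<noteq> of_real \<xi>
              \<longrightarrow> cmod \<eta> < \<bar>\<xi>\<bar>)"
proof -
  define c where "c = real (thr_c a n)"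
  define S where "S = real (sum_list (thr_bseq a n))"
  define F where "F = real (thr_F1 a n)"
  have "a n" using thr_connected_last_type1[OF assms(3)] assms(2) by simp
  moreover have "thr_bseq a n \<noteq> []" by (metis assms(5) less_irrefl thr_size_eq_choose_two)
  ultimately have "0 < F" "F < c * S"
    using thr_F1_bounds[of a n] assms(1) unfolding F_def c_def S_def by (simp_all flip: of_nat_mult)
  moreover have "0 < c"
    using \<open>a n\<close> assms(2) unfolding c_def thr_c_def by (force simp: card_gt_0_iff)
  moreover have P: "thr_P a n = [:c * S - F, c - S, - (c + 1), 1:]"
    unfolding thr_P_def c_def S_def F_def Let_def ..
  moreover have "poly (thr_P a n) c = - F"
    unfolding P by (simp add: algebra_simps)
  ultimately show ?thesis
    using assms(6,7) unfolding P by (intro monic_cubic_dominant_root[of _ c]) auto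
qed

end
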